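(* Let $(\mathcal R,\Sigma,\Delta)$ be a right triangulated category with right semi-equivalence. Suppose $\mathcal R$ is idempotent complete and additively finite (finitely many isomorphism classes of indecomposable objects, every object a finite direct sum of indecomposables). Then $\Sigma$ is an autoequivalence of $\mathcal R$; in particular $(\mathcal R,\Sigma,\Delta)$ is a triangulated category.
   Context: A right triangulated category $(\mathcal R,\Sigma,\Delta)$: additive category $\mathcal R$, additive endofunctor $\Sigma$, class $\Delta$ of right triangles $A\to B\to C\to\Sigma A$ satisfying the axioms of a triangulated category except that $\Sigma$ need not be an equivalence and only rotation to the right ($B\xrightarrow{y}C\xrightarrow{z}\Sigma A\xrightarrow{-\Sigma x}\Sigma B$) is required. $\Sigma$ is a right semi-equivalence if it is fully faithful and its essential image $\Sigma\mathcal R$ is closed under extensions (for every right triangle $A\to B\to C\to\Sigma A$ with $A,C\in\Sigma\mathcal R$ also $B\in\Sigma\mathcal R$). *)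

theory Defs
  imports Main
begin

text \<open>A category is given by a set of objects, a set of morphisms, domain and
codomain maps, composition (Comp g f = g after f), identities, and the additive
structure on hom-sets (Add, Zero A B, Neg).\<close>

record ('o,'m) addcat =
  Obj  :: "'o set"
  Mor  :: "'m set"
  Dom  :: "'m \<Rightarrow> 'o"
  Cod  :: "'m \<Rightarrow> 'o"
  Comp :: "'m \<Rightarrow> 'm \<Rightarrow> 'm"
  Id   :: "'o \<Rightarrow> 'm"
  Add  :: "'m \<Rightarrow> 'm \<Rightarrow> 'm"
  Zero :: "'o \<Rightarrow> 'o \<Rightarrow> 'm"
  Neg  :: "'m \<Rightarrow> 'm"

definition hom :: "('o,'m) addcat \<Rightarrow> 'o \<Rightarrow> 'o \<Rightarrow> 'm set" where
  "hom C A B = {f \<in> Mor C. Dom C f = A \<and> Cod C f = B}"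

definition is_category :: "('o,'m) addcat \<Rightarrow> bool" where
  "is_category C \<longleftrightarrow>
     (\<forall>f \<in> Mor C. Dom C f \<in> Obj C \<and> Cod C f \<in> Obj C) \<and>
     (\<forall>A \<in> Obj C. Id C A \<in> hom C A A) \<and>
     (\<forall>A\<in>Obj C. \<forall>B\<in>Obj C. \<forall>D\<in>Obj C. \<forall>f \<in> hom C A B. \<forall>g \<in> hom C B D.
         Comp C g f \<in> hom C A D) \<and>
     (\<forall>A\<in>Obj C. \<forall>B\<in>Obj C. \<forall>D\<in>Obj C. \<forall>E\<in>Obj C.
        \<forall>f \<in> hom C A B. \<forall>g \<in> hom C B D. \<forall>h \<in> hom C D E.
         Comp C h (Comp C g f) = Comp C (Comp C h g) f) \<and>
     (\<forall>A\<in>Obj C. \<forall>B\<in>Obj C. \<forall>f \<in> hom C A B.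
         Comp C f (Id C A) = f \<and> Comp C (Id C B) f = f)"

definition is_preadditive :: "('o,'m) addcat \<Rightarrow> bool" where
  "is_preadditive C \<longleftrightarrow> is_category C \<and>
     (\<forall>A\<in>Obj C. \<forall>B\<in>Obj C.
        Zero C A B \<in> hom C A B \<and>
        (\<forall>f\<in>hom C A B. \<forall>g\<in>hom C A B. Add C f g \<in> hom C A B) \<and>
        (\<forall>f\<in>hom C A B. Neg C f \<in> hom C A B) \<and>
        (\<forall>f\<in>hom C A B. \<forall>g\<in>hom C A B. \<forall>h\<in>hom C A B.
            Add C (Add C f g) h = Add C f (Add C g h)) \<and>
        (\<forall>f\<in>hom C A B. \<forall>g\<in>hom C A B. Add C f g = Add C g f) \<and>
        (\<forall>f\<in>hom C A B. Add C f (Zero C A B) = f) \<and>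
        (\<forall>f\<in>hom C A B. Add C f (Neg C f) = Zero C A B)) \<and>
     (\<forall>A\<in>Obj C. \<forall>B\<in>Obj C. \<forall>D\<in>Obj C.
        (\<forall>f\<in>hom C A B. \<forall>g\<in>hom C B D. \<forall>g'\<in>hom C B D.
            Comp C (Add C g g') f = Add C (Comp C g f) (Comp C g' f)) \<and>
        (\<forall>f\<in>hom C A B. \<forall>f'\<in>hom C A B. \<forall>g\<in>hom C B D.
            Comp C g (Add C f f') = Add C (Comp C g f) (Comp C g f')))"

definition is_zero_obj :: "('o,'m) addcat \<Rightarrow> 'o \<Rightarrow> bool" where
  "is_zero_obj C Z0 \<longleftrightarrow> Z0 \<in> Obj C \<and> Id C Z0 = Zero C Z0 Z0"

definition is_biproduct ::
  "('o,'m) addcat \<Rightarrow> 'o \<Rightarrow> 'o \<Rightarrow> 'o \<Rightarrow> 'm \<Rightarrow> 'm \<Rightarrow> 'm \<Rightarrow> 'm \<Rightarrow> bool" where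
  "is_biproduct C S A1 A2 i1 i2 p1 p2 \<longleftrightarrow>
     S \<in> Obj C \<and> A1 \<in> Obj C \<and> A2 \<in> Obj C \<and>
     i1 \<in> hom C A1 S \<and> i2 \<in> hom C A2 S \<and> p1 \<in> hom C S A1 \<and> p2 \<in> hom C S A2 \<and>
     Comp C p1 i1 = Id C A1 \<and> Comp C p2 i2 = Id C A2 \<and>
     Comp C p1 i2 = Zero C A2 A1 \<and> Comp C p2 i1 = Zero C A1 A2 \<and>
     Add C (Comp C i1 p1) (Comp C i2 p2) = Id C S"

definition is_additive :: "('o,'m) addcat \<Rightarrow> bool" where
  "is_additive C \<longleftrightarrow> is_preadditive C \<and>
     (\<exists>Z0. is_zero_obj C Z0) \<and>
     (\<forall>A1\<in>Obj C. \<forall>A2\<in>Obj C. \<exists>S i1 i2 p1 p2. is_biproduct C S A1 A2 i1 i2 p1 p2)"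

definition is_iso :: "('o,'m) addcat \<Rightarrow> 'o \<Rightarrow> 'o \<Rightarrow> 'm \<Rightarrow> bool" where
  "is_iso C A B f \<longleftrightarrow> f \<in> hom C A B \<and>
     (\<exists>g \<in> hom C B A. Comp C g f = Id C A \<and> Comp C f g = Id C B)"

definition isomorphic :: "('o,'m) addcat \<Rightarrow> 'o \<Rightarrow> 'o \<Rightarrow> bool" where
  "isomorphic C A B \<longleftrightarrow> A \<in> Obj C \<and> B \<in> Obj C \<and> (\<exists>f. is_iso C A B f)"

definition additive_endofunctor ::
  "('o,'m) addcat \<Rightarrow> ('o \<Rightarrow> 'o) \<Rightarrow> ('m \<Rightarrow> 'm) \<Rightarrow> bool" where
  "additive_endofunctor C SO SM \<longleftrightarrow>
     (\<forall>A\<in>Obj C. SO A \<in> Obj C) \<and>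
     (\<forall>A\<in>Obj C. \<forall>B\<in>Obj C. \<forall>f\<in>hom C A B. SM f \<in> hom C (SO A) (SO B)) \<and>
     (\<forall>A\<in>Obj C. SM (Id C A) = Id C (SO A)) \<and>
     (\<forall>A\<in>Obj C. \<forall>B\<in>Obj C. \<forall>D\<in>Obj C. \<forall>f\<in>hom C A B. \<forall>g\<in>hom C B D.
         SM (Comp C g f) = Comp C (SM g) (SM f)) \<and>
     (\<forall>A\<in>Obj C. \<forall>B\<in>Obj C. \<forall>f\<in>hom C A B. \<forall>g\<in>hom C A B.
         SM (Add C f g) = Add C (SM f) (SM g))"

definition fully_faithful ::
  "('o,'m) addcat \<Rightarrow> ('o \<Rightarrow> 'o) \<Rightarrow> ('m \<Rightarrow> 'm) \<Rightarrow> bool" where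
  "fully_faithful C SO SM \<longleftrightarrow>
     (\<forall>A\<in>Obj C. \<forall>B\<in>Obj C. bij_betw SM (hom C A B) (hom C (SO A) (SO B)))"

definition ess_image :: "('o,'m) addcat \<Rightarrow> ('o \<Rightarrow> 'o) \<Rightarrow> 'o set" where
  "ess_image C SO = {X \<in> Obj C. \<exists>A\<in>Obj C. isomorphic C X (SO A)}"

definition essentially_surjective :: "('o,'m) addcat \<Rightarrow> ('o \<Rightarrow> 'o) \<Rightarrow> bool" where
  "essentially_surjective C SO \<longleftrightarrow> ess_image C SO = Obj C"

definition autoequivalence ::
  "('o,'m) addcat \<Rightarrow> ('o \<Rightarrow> 'o) \<Rightarrow> ('m \<Rightarrow> 'm) \<Rightarrow> bool" where
  "autoequivalence C SO SM \<longleftrightarrow>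
     additive_endofunctor C SO SM \<and> fully_faithful C SO SM \<and> essentially_surjective C SO"

text \<open>A (candidate) right triangle A -x-> B -y-> C -z-> SO A, encoded as a tuple
(A, B, C, x, y, z).\<close>
type_synonym ('o,'m) tri = "'o \<times> 'o \<times> 'o \<times> 'm \<times> 'm \<times> 'm"

definition is_tri :: "('o,'m) addcat \<Rightarrow> ('o \<Rightarrow> 'o) \<Rightarrow> ('o,'m) tri \<Rightarrow> bool" where
  "is_tri C SO T = (case T of (A,B,D,x,y,z) \<Rightarrow>
     A \<in> Obj C \<and> B \<in> Obj C \<and> D \<in> Obj C \<and>
     x \<in> hom C A B \<and> y \<in> hom C B D \<and> z \<in> hom C D (SO A))"

definition tri_morph ::
  "('o,'m) addcat \<Rightarrow> ('o \<Rightarrow> 'o) \<Rightarrow> ('m \<Rightarrow> 'm) \<Rightarrow> ('o,'m) tri \<Rightarrow> ('o,'m) tri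
     \<Rightarrow> 'm \<Rightarrow> 'm \<Rightarrow> 'm \<Rightarrow> bool" where
  "tri_morph C SO SM T T' a b c = (case T of (A,B,D,x,y,z) \<Rightarrow> case T' of (A',B',D',x',y',z') \<Rightarrow>
     a \<in> hom C A A' \<and> b \<in> hom C B B' \<and> c \<in> hom C D D' \<and>
     Comp C b x = Comp C x' a \<and> Comp C c y = Comp C y' b \<and>
     Comp C (SM a) z = Comp C z' c)"

definition tri_iso ::
  "('o,'m) addcat \<Rightarrow> ('o \<Rightarrow> 'o) \<Rightarrow> ('m \<Rightarrow> 'm) \<Rightarrow> ('o,'m) tri \<Rightarrow> ('o,'m) tri
     \<Rightarrow> 'm \<Rightarrow> 'm \<Rightarrow> 'm \<Rightarrow> bool" where
  "tri_iso C SO SM T T' a b c \<longleftrightarrow> tri_morph C SO SM T T' a b c \<and>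
     (case T of (A,B,D,_) \<Rightarrow> case T' of (A',B',D',_) \<Rightarrow>
        is_iso C A A' a \<and> is_iso C B B' b \<and> is_iso C D D' c)"

text \<open>Right triangulated category: axioms of a triangulated category
(TR1--TR4, octahedral axiom included) with only right rotation and without
assuming SO is an equivalence.\<close>
definition right_triangulated ::
  "('o,'m) addcat \<Rightarrow> ('o \<Rightarrow> 'o) \<Rightarrow> ('m \<Rightarrow> 'm) \<Rightarrow> ('o,'m) tri set \<Rightarrow> bool" where
  "right_triangulated C SO SM Delta \<longleftrightarrow>
     is_additive C \<and> additive_endofunctor C SO SM \<and>
     (\<forall>T\<in>Delta. is_tri C SO T) \<and>
     \<comment> \<open>RTR1(a): closure under isomorphism of triangles\<close>
     (\<forall>T\<in>Delta. \<forall>T' a b c. is_tri C SO T' \<and> tri_iso C SO SM T T' a b c \<longrightarrow> T' \<in> Delta) \<and>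
     \<comment> \<open>RTR1(b): A -id-> A -> 0 -> SO A is a right triangle\<close>
     (\<forall>A\<in>Obj C. \<forall>Z0. is_zero_obj C Z0 \<longrightarrow>
        (A, A, Z0, Id C A, Zero C A Z0, Zero C Z0 (SO A)) \<in> Delta) \<and>
     \<comment> \<open>RTR1(c): every morphism embeds in a right triangle\<close>
     (\<forall>A\<in>Obj C. \<forall>B\<in>Obj C. \<forall>x\<in>hom C A B. \<exists>D y z. (A,B,D,x,y,z) \<in> Delta) \<and>
     \<comment> \<open>RTR2: rotation to the right\<close>
     (\<forall>A B D x y z. (A,B,D,x,y,z) \<in> Delta \<longrightarrow> (B, D, SO A, y, z, Neg C (SM x)) \<in> Delta) \<and>
     \<comment> \<open>RTR3: completion of morphisms of triangles\<close>
     (\<forall>A B D x y z A' B' D' x' y' z' a b.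
        (A,B,D,x,y,z) \<in> Delta \<and> (A',B',D',x',y',z') \<in> Delta \<and>
        a \<in> hom C A A' \<and> b \<in> hom C B B' \<and> Comp C b x = Comp C x' a \<longrightarrow>
        (\<exists>c. tri_morph C SO SM (A,B,D,x,y,z) (A',B',D',x',y',z') a b c)) \<and>
     \<comment> \<open>RTR4: octahedral axiom\<close>
     (\<forall>A B D x Z' j k E v l i Y' m n.
        (A,B,Z',x,j,k) \<in> Delta \<and> (B,D,E,v,l,i) \<in> Delta \<and>
        (A,D,Y',Comp C v x,m,n) \<in> Delta \<longrightarrow>
        (\<exists>f g. (Z',Y',E,f,g,Comp C (SM j) i) \<in> Delta \<and>
           Comp C f j = Comp C m v \<and> Comp C n f = k \<and>
           Comp C g m = l \<and> Comp C i g = Comp C (SM x) n))"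

definition closed_under_extensions ::
  "('o,'m) addcat \<Rightarrow> ('o,'m) tri set \<Rightarrow> 'o set \<Rightarrow> bool" where
  "closed_under_extensions C Delta S \<longleftrightarrow>
     (\<forall>A B D x y z. (A,B,D,x,y,z) \<in> Delta \<and> A \<in> S \<and> D \<in> S \<longrightarrow> B \<in> S)"

definition right_semi_equivalence ::
  "('o,'m) addcat \<Rightarrow> ('o \<Rightarrow> 'o) \<Rightarrow> ('m \<Rightarrow> 'm) \<Rightarrow> ('o,'m) tri set \<Rightarrow> bool" where
  "right_semi_equivalence C SO SM Delta \<longleftrightarrow>
     fully_faithful C SO SM \<and> closed_under_extensions C Delta (ess_image C SO)"

definition triangulated ::
  "('o,'m) addcat \<Rightarrow> ('o \<Rightarrow> 'o) \<Rightarrow> ('m \<Rightarrow> 'm) \<Rightarrow> ('o,'m) tri set \<Rightarrow> bool" where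
  "triangulated C SO SM Delta \<longleftrightarrow>
     right_triangulated C SO SM Delta \<and> autoequivalence C SO SM \<and>
     (\<forall>A B D x y z. is_tri C SO (A,B,D,x,y,z) \<and>
        (B, D, SO A, y, z, Neg C (SM x)) \<in> Delta \<longrightarrow> (A,B,D,x,y,z) \<in> Delta)"

definition idempotent_complete :: "('o,'m) addcat \<Rightarrow> bool" where
  "idempotent_complete C \<longleftrightarrow>
     (\<forall>A\<in>Obj C. \<forall>e\<in>hom C A A. Comp C e e = e \<longrightarrow>
        (\<exists>B\<in>Obj C. \<exists>r\<in>hom C A B. \<exists>s\<in>hom C B A.
            Comp C s r = e \<and> Comp C r s = Id C B))"

definition indecomposable :: "('o,'m) addcat \<Rightarrow> 'o \<Rightarrow> bool" where
  "indecomposable C A \<longleftrightarrow> A \<in> Obj C \<and> \<not> is_zero_obj C A \<and>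
     (\<forall>B1 B2 i1 i2 p1 p2. is_biproduct C A B1 B2 i1 i2 p1 p2 \<longrightarrow>
        is_zero_obj C B1 \<or> is_zero_obj C B2)"

inductive fin_dsum_indec :: "('o,'m) addcat \<Rightarrow> 'o \<Rightarrow> bool" for C where
  zero: "is_zero_obj C Z0 \<Longrightarrow> fin_dsum_indec C Z0"
| indec: "indecomposable C A \<Longrightarrow> fin_dsum_indec C A"
| sum: "is_biproduct C S A1 A2 i1 i2 p1 p2 \<Longrightarrow> fin_dsum_indec C A1 \<Longrightarrow>
        fin_dsum_indec C A2 \<Longrightarrow> fin_dsum_indec C S"

definition additively_finite :: "('o,'m) addcat \<Rightarrow> bool" where
  "additively_finite C \<longleftrightarrow>
     (\<exists>F. finite F \<and> F \<subseteq> Obj C \<and>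
        (\<forall>A. indecomposable C A \<longrightarrow> (\<exists>B\<in>F. isomorphic C A B))) \<and>
     (\<forall>X\<in>Obj C. fin_dsum_indec C X)"

end

(* Sigma is fully faithful, so it preserves and reflects isomorphism, and since C is
   idempotent complete it sends indecomposables to indecomposables: a decomposition of
   Sigma A into two summands gives complementary idempotents of Sigma A, which lift to
   complementary idempotents of A and split there.  Thus Sigma induces an injective
   self-map of the finite set of isomorphism classes of indecomposables, which is then
   surjective; as Sigma preserves biproducts and every object is a finite biproduct of
   indecomposables, Sigma is essentially surjective.
   It remains to rotate triangles to the left.  Given A -> B -> D -> Sigma A whose right
   rotation is a triangle, embed A -> B in a triangle A -> B -> D' -> Sigma A and compare
   the two after rotating both into the image of Sigma.  Exactness of triangles (which
   uses fullness of Sigma) makes the comparison morphism an isomorphism, and it lifts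
   to an isomorphism of triangles D' -> D. *)

theory Submission
  imports Defs
begin

definition complementary_idempotents :: "('o,'m) addcat \<Rightarrow> 'o \<Rightarrow> 'm \<Rightarrow> 'm \<Rightarrow> bool" where
  "complementary_idempotents C A e1 e2 \<longleftrightarrow> e1 \<in> hom C A A \<and> e2 \<in> hom C A A \<and>
     Comp C e1 e1 = e1 \<and> Comp C e2 e2 = e2 \<and>
     Comp C e1 e2 = Zero C A A \<and> Comp C e2 e1 = Zero C A A \<and> Add C e1 e2 = Id C A"

definition iso_class :: "('o,'m) addcat \<Rightarrow> 'o \<Rightarrow> 'o set" where
  "iso_class C X = {Y. isomorphic C X Y}"

locale preadditive =
  fixes C :: "('o,'m) addcat"
  assumes preadditive: "is_preadditive C"
begin

lemma hom_iff: "f \<in> hom C A B \<longleftrightarrow> f \<in> Mor C \<and> Dom C f = A \<and> Cod C f = B"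
  unfolding hom_def by auto

lemma category: "is_category C"
  using preadditive unfolding is_preadditive_def by simp

lemma category_axioms:
    "\<forall>f \<in> Mor C. Dom C f \<in> Obj C \<and> Cod C f \<in> Obj C"
    "\<forall>A \<in> Obj C. Id C A \<in> hom C A A"
    "\<forall>A\<in>Obj C. \<forall>B\<in>Obj C. \<forall>D\<in>Obj C. \<forall>f \<in> hom C A B. \<forall>g \<in> hom C B D.
       Comp C g f \<in> hom C A D"
    "\<forall>A\<in>Obj C. \<forall>B\<in>Obj C. \<forall>D\<in>Obj C. \<forall>E\<in>Obj C.
       \<forall>f \<in> hom C A B. \<forall>g \<in> hom C B D. \<forall>h \<in> hom C D E.
       Comp C h (Comp C g f) = Comp C (Comp C h g) f"
    "\<forall>A\<in>Obj C. \<forall>B\<in>Obj C. \<forall>f \<in> hom C A B.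
       Comp C f (Id C A) = f \<and> Comp C (Id C B) f = f"
  using category unfolding is_category_def by blast+

lemma group_axioms:
    "\<forall>A\<in>Obj C. \<forall>B\<in>Obj C.
       Zero C A B \<in> hom C A B \<and>
       (\<forall>f\<in>hom C A B. \<forall>g\<in>hom C A B. Add C f g \<in> hom C A B) \<and>
       (\<forall>f\<in>hom C A B. Neg C f \<in> hom C A B) \<and>
       (\<forall>f\<in>hom C A B. \<forall>g\<in>hom C A B. \<forall>h\<in>hom C A B.
          Add C (Add C f g) h = Add C f (Add C g h)) \<and>
       (\<forall>f\<in>hom C A B. \<forall>g\<in>hom C A B. Add C f g = Add C g f) \<and>
       (\<forall>f\<in>hom C A B. Add C f (Zero C A B) = f) \<and>
       (\<forall>f\<in>hom C A B. Add C f (Neg C f) = Zero C A B)"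
  and bilinearity_axioms:
    "\<forall>A\<in>Obj C. \<forall>B\<in>Obj C. \<forall>D\<in>Obj C.
       (\<forall>f\<in>hom C A B. \<forall>g\<in>hom C B D. \<forall>g'\<in>hom C B D.
          Comp C (Add C g g') f = Add C (Comp C g f) (Comp C g' f)) \<and>
       (\<forall>f\<in>hom C A B. \<forall>f'\<in>hom C A B. \<forall>g\<in>hom C B D.
          Comp C g (Add C f f') = Add C (Comp C g f) (Comp C g f'))"
  using preadditive[unfolded is_preadditive_def]
  by (rule conjunct2[THEN conjunct1], rule conjunct2[THEN conjunct2])

lemma Dom_in_Obj [simp]: "f \<in> Mor C \<Longrightarrow> Dom C f \<in> Obj C"
  and Cod_in_Obj [simp]: "f \<in> Mor C \<Longrightarrow> Cod C f \<in> Obj C"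
  using category_axioms(1) by blast+

lemma hom_objs: "f \<in> hom C A B \<Longrightarrow> A \<in> Obj C \<and> B \<in> Obj C"
  by (auto simp: hom_iff)

lemma id_in_hom [intro, simp]: "A \<in> Obj C \<Longrightarrow> Id C A \<in> hom C A A"
  using category_axioms(2) by blast

lemma comp_in_hom [intro]: "f \<in> hom C A B \<Longrightarrow> g \<in> hom C B D \<Longrightarrow> Comp C g f \<in> hom C A D"
  using category_axioms(3) hom_objs by blast

lemma comp_assoc: "f \<in> hom C A B \<Longrightarrow> g \<in> hom C B D \<Longrightarrow> h \<in> hom C D E \<Longrightarrow>
    Comp C h (Comp C g f) = Comp C (Comp C h g) f"
  using category_axioms(4) hom_objs by blast

lemma comp_id_right: "f \<in> hom C A B \<Longrightarrow> Comp C f (Id C A) = f"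
  and comp_id_left: "f \<in> hom C A B \<Longrightarrow> Comp C (Id C B) f = f"
  using category_axioms(5) hom_objs by blast+

lemma zero_in_hom [intro, simp]: "A \<in> Obj C \<Longrightarrow> B \<in> Obj C \<Longrightarrow> Zero C A B \<in> hom C A B"
  using group_axioms by blast

lemma add_in_hom [intro]: "f \<in> hom C A B \<Longrightarrow> g \<in> hom C A B \<Longrightarrow> Add C f g \<in> hom C A B"
  and neg_in_hom [intro]: "f \<in> hom C A B \<Longrightarrow> Neg C f \<in> hom C A B"
  using group_axioms hom_objs by blast+

lemma add_assoc: "f \<in> hom C A B \<Longrightarrow> g \<in> hom C A B \<Longrightarrow> h \<in> hom C A B \<Longrightarrow>
    Add C (Add C f g) h = Add C f (Add C g h)"
  and add_commute: "f \<in> hom C A B \<Longrightarrow> g \<in> hom C A B \<Longrightarrow> Add C f g = Add C g f"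
  and add_zero_right: "f \<in> hom C A B \<Longrightarrow> Add C f (Zero C A B) = f"
  and add_neg_right: "f \<in> hom C A B \<Longrightarrow> Add C f (Neg C f) = Zero C A B"
  using group_axioms hom_objs by blast+

lemma comp_add_left: "f \<in> hom C A B \<Longrightarrow> g \<in> hom C B D \<Longrightarrow> g' \<in> hom C B D \<Longrightarrow>
    Comp C (Add C g g') f = Add C (Comp C g f) (Comp C g' f)"
  and comp_add_right: "f \<in> hom C A B \<Longrightarrow> f' \<in> hom C A B \<Longrightarrow> g \<in> hom C B D \<Longrightarrow>
    Comp C g (Add C f f') = Add C (Comp C g f) (Comp C g f')"
  using bilinearity_axioms hom_objs by blast+

lemma add_zero_left: "f \<in> hom C A B \<Longrightarrow> Add C (Zero C A B) f = f"
  by (metis add_commute add_zero_right hom_objs zero_in_hom)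

lemma add_left_cancel:
  assumes "f \<in> hom C A B" "g \<in> hom C A B" "h \<in> hom C A B" and "Add C f g = Add C f h"
  shows "g = h"
proof -
  have "g = Add C (Add C (Neg C f) f) g"
    using assms by (metis add_commute add_neg_right neg_in_hom add_zero_left)
  also have "\<dots> = Add C (Neg C f) (Add C f g)"
    using assms by (intro add_assoc) auto
  also have "\<dots> = Add C (Neg C f) (Add C f h)"
    using assms by simp
  also have "\<dots> = Add C (Add C (Neg C f) f) h"
    using assms by (intro add_assoc[symmetric]) auto
  also have "\<dots> = h"
    using assms by (metis add_commute add_neg_right neg_in_hom add_zero_left)
  finally show ?thesis .
qed

lemma idempotent_add_eq_zero: "f \<in> hom C A B \<Longrightarrow> Add C f f = f \<Longrightarrow> f = Zero C A B"
  by (metis add_left_cancel add_zero_right hom_objs zero_in_hom)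

lemma comp_zero_right:
  assumes "g \<in> hom C B D" "A \<in> Obj C"
  shows "Comp C g (Zero C A B) = Zero C A D"
proof -
  have B: "B \<in> Obj C" using assms hom_objs by blast
  have "Comp C g (Zero C A B) = Comp C g (Add C (Zero C A B) (Zero C A B))"
    using assms B by (simp add: add_zero_right)
  also have "\<dots> = Add C (Comp C g (Zero C A B)) (Comp C g (Zero C A B))"
    using assms B by (intro comp_add_right) auto
  finally show ?thesis using assms B by (metis idempotent_add_eq_zero zero_in_hom comp_in_hom)
qed

lemma comp_zero_left:
  assumes "f \<in> hom C A B" "D \<in> Obj C"
  shows "Comp C (Zero C B D) f = Zero C A D"
proof -
  have A: "A \<in> Obj C" "B \<in> Obj C" using assms hom_objs by blast+
  have "Comp C (Zero C B D) f = Comp C (Add C (Zero C B D) (Zero C B D)) f"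
    using assms A by (simp add: add_zero_right)
  also have "\<dots> = Add C (Comp C (Zero C B D) f) (Comp C (Zero C B D) f)"
    using assms A by (intro comp_add_left) auto
  finally show ?thesis using assms A by (metis idempotent_add_eq_zero zero_in_hom comp_in_hom)
qed

lemma neg_unique: "f \<in> hom C A B \<Longrightarrow> g \<in> hom C A B \<Longrightarrow> Add C f g = Zero C A B \<Longrightarrow> g = Neg C f"
  by (metis add_left_cancel add_neg_right neg_in_hom)

lemma neg_neg: "f \<in> hom C A B \<Longrightarrow> Neg C (Neg C f) = f"
  by (metis add_commute add_neg_right neg_in_hom neg_unique)

lemma comp_neg_right:
  assumes "f \<in> hom C A B" "g \<in> hom C B D"
  shows "Comp C g (Neg C f) = Neg C (Comp C g f)"
proof -
  have "Add C (Comp C g f) (Comp C g (Neg C f)) = Zero C A D"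
    using assms by (metis add_neg_right comp_add_right neg_in_hom comp_zero_right hom_objs)
  thus ?thesis using assms by (meson neg_unique comp_in_hom neg_in_hom)
qed

lemma comp_neg_left:
  assumes "f \<in> hom C A B" "g \<in> hom C B D"
  shows "Comp C (Neg C g) f = Neg C (Comp C g f)"
proof -
  have "Add C (Comp C g f) (Comp C (Neg C g) f) = Zero C A D"
    using assms by (metis add_neg_right comp_add_left neg_in_hom comp_zero_left hom_objs)
  thus ?thesis using assms by (meson neg_unique comp_in_hom neg_in_hom)
qed

lemma neg_zero: "A \<in> Obj C \<Longrightarrow> B \<in> Obj C \<Longrightarrow> Neg C (Zero C A B) = Zero C A B"
  using neg_unique[of "Zero C A B" A B "Zero C A B"] by (simp add: add_zero_right)

lemma eq_if_diff_eq_zero: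
  "f \<in> hom C A B \<Longrightarrow> g \<in> hom C A B \<Longrightarrow> Add C f (Neg C g) = Zero C A B \<Longrightarrow> f = g"
  by (metis neg_neg neg_in_hom neg_unique)

lemma add_diff_cancel_left:
  assumes "f \<in> hom C A B" "g \<in> hom C A B"
  shows "Add C f (Add C g (Neg C f)) = g"
proof -
  have "Add C f (Add C g (Neg C f)) = Add C f (Add C (Neg C f) g)"
    using assms add_commute by (metis neg_in_hom)
  also have "\<dots> = Add C (Add C f (Neg C f)) g"
    using assms by (metis add_assoc neg_in_hom)
  also have "\<dots> = g"
    using assms by (simp add: add_neg_right add_zero_left)
  finally show ?thesis .
qed

text \<open>The same laws for arbitrary arrows with domain and codomain side conditions, so
that the simplifier can normalise composites.\<close>

lemma homI: "f \<in> Mor C \<Longrightarrow> f \<in> hom C (Dom C f) (Cod C f)"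
  unfolding hom_def by auto

lemma Mor_comp [simp]: "f \<in> Mor C \<Longrightarrow> g \<in> Mor C \<Longrightarrow> Cod C f = Dom C g \<Longrightarrow> Comp C g f \<in> Mor C"
  and Dom_comp [simp]: "f \<in> Mor C \<Longrightarrow> g \<in> Mor C \<Longrightarrow> Cod C f = Dom C g \<Longrightarrow> Dom C (Comp C g f) = Dom C f"
  and Cod_comp [simp]: "f \<in> Mor C \<Longrightarrow> g \<in> Mor C \<Longrightarrow> Cod C f = Dom C g \<Longrightarrow> Cod C (Comp C g f) = Cod C g"
  using comp_in_hom[OF homI[of f], of g "Cod C g"] homI[of g] by (auto simp: hom_iff)

lemma Mor_id [simp]: "A \<in> Obj C \<Longrightarrow> Id C A \<in> Mor C"
  and Dom_id [simp]: "A \<in> Obj C \<Longrightarrow> Dom C (Id C A) = A"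
  and Cod_id [simp]: "A \<in> Obj C \<Longrightarrow> Cod C (Id C A) = A"
  using id_in_hom[of A] unfolding hom_iff by auto

lemma Mor_zero [simp]: "A \<in> Obj C \<Longrightarrow> B \<in> Obj C \<Longrightarrow> Zero C A B \<in> Mor C"
  and Dom_zero [simp]: "A \<in> Obj C \<Longrightarrow> B \<in> Obj C \<Longrightarrow> Dom C (Zero C A B) = A"
  and Cod_zero [simp]: "A \<in> Obj C \<Longrightarrow> B \<in> Obj C \<Longrightarrow> Cod C (Zero C A B) = B"
  using zero_in_hom[of A B] unfolding hom_iff by auto

lemma Mor_add [simp]:
    "f \<in> Mor C \<Longrightarrow> g \<in> Mor C \<Longrightarrow> Dom C g = Dom C f \<Longrightarrow> Cod C g = Cod C f \<Longrightarrow> Add C f g \<in> Mor C"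
  and Dom_add [simp]:
    "f \<in> Mor C \<Longrightarrow> g \<in> Mor C \<Longrightarrow> Dom C g = Dom C f \<Longrightarrow> Cod C g = Cod C f \<Longrightarrow> Dom C (Add C f g) = Dom C f"
  and Cod_add [simp]:
    "f \<in> Mor C \<Longrightarrow> g \<in> Mor C \<Longrightarrow> Dom C g = Dom C f \<Longrightarrow> Cod C g = Cod C f \<Longrightarrow> Cod C (Add C f g) = Cod C f"
  using add_in_hom[OF homI[of f], of g] homI[of g] by (auto simp: hom_iff)

lemma Mor_neg [simp]: "f \<in> Mor C \<Longrightarrow> Neg C f \<in> Mor C"
  and Dom_neg [simp]: "f \<in> Mor C \<Longrightarrow> Dom C (Neg C f) = Dom C f"
  and Cod_neg [simp]: "f \<in> Mor C \<Longrightarrow> Cod C (Neg C f) = Cod C f"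
  using neg_in_hom[OF homI[of f]] unfolding hom_iff by auto

lemma comp_assoc_Mor [simp]:
  "f \<in> Mor C \<Longrightarrow> g \<in> Mor C \<Longrightarrow> h \<in> Mor C \<Longrightarrow> Cod C f = Dom C g \<Longrightarrow> Cod C g = Dom C h \<Longrightarrow>
    Comp C (Comp C h g) f = Comp C h (Comp C g f)"
  using comp_assoc[OF homI[of f], of g "Cod C g" h "Cod C h"] homI[of g] homI[of h] by simp

lemma comp_id_left_Mor [simp]: "f \<in> Mor C \<Longrightarrow> Cod C f = B \<Longrightarrow> Comp C (Id C B) f = f"
  and comp_id_right_Mor [simp]: "f \<in> Mor C \<Longrightarrow> Dom C f = A \<Longrightarrow> Comp C f (Id C A) = f"
  using comp_id_left[OF homI[of f]] comp_id_right[OF homI[of f]] by auto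

lemma comp_zero_right_Mor [simp]:
    "g \<in> Mor C \<Longrightarrow> A \<in> Obj C \<Longrightarrow> Dom C g = B \<Longrightarrow> Comp C g (Zero C A B) = Zero C A (Cod C g)"
  and comp_zero_left_Mor [simp]:
    "f \<in> Mor C \<Longrightarrow> D \<in> Obj C \<Longrightarrow> Cod C f = B \<Longrightarrow> Comp C (Zero C B D) f = Zero C (Dom C f) D"
  using comp_zero_right[OF homI[of g]] comp_zero_left[OF homI[of f]] by auto

lemma comp_add_left_Mor [simp]:
  "f \<in> Mor C \<Longrightarrow> g \<in> Mor C \<Longrightarrow> g' \<in> Mor C \<Longrightarrow> Cod C f = Dom C g \<Longrightarrow>
    Dom C g' = Dom C g \<Longrightarrow> Cod C g' = Cod C g \<Longrightarrow>
    Comp C (Add C g g') f = Add C (Comp C g f) (Comp C g' f)"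
  using comp_add_left[OF homI[of f], of g "Cod C g" g'] homI[of g] homI[of g'] by simp

lemma comp_add_right_Mor [simp]:
  "f \<in> Mor C \<Longrightarrow> f' \<in> Mor C \<Longrightarrow> g \<in> Mor C \<Longrightarrow> Cod C f = Dom C g \<Longrightarrow>
    Dom C f' = Dom C f \<Longrightarrow> Cod C f' = Cod C f \<Longrightarrow>
    Comp C g (Add C f f') = Add C (Comp C g f) (Comp C g f')"
  using comp_add_right[OF homI[of f], of f' g "Cod C g"] homI[of f'] homI[of g] by simp

lemma comp_neg_right_Mor [simp]:
    "f \<in> Mor C \<Longrightarrow> g \<in> Mor C \<Longrightarrow> Cod C f = Dom C g \<Longrightarrow> Comp C g (Neg C f) = Neg C (Comp C g f)"
  and comp_neg_left_Mor [simp]: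
    "f \<in> Mor C \<Longrightarrow> g \<in> Mor C \<Longrightarrow> Cod C f = Dom C g \<Longrightarrow> Comp C (Neg C g) f = Neg C (Comp C g f)"
  using comp_neg_right[OF homI[of f], of g "Cod C g"] comp_neg_left[OF homI[of f], of g "Cod C g"]
    homI[of g] by simp_all

lemma neg_neg_Mor [simp]: "f \<in> Mor C \<Longrightarrow> Neg C (Neg C f) = f"
  using neg_neg[OF homI[of f]] .

lemma add_zero_right_Mor [simp]: "f \<in> Mor C \<Longrightarrow> Dom C f = A \<Longrightarrow> Cod C f = B \<Longrightarrow> Add C f (Zero C A B) = f"
  and add_zero_left_Mor [simp]: "f \<in> Mor C \<Longrightarrow> Dom C f = A \<Longrightarrow> Cod C f = B \<Longrightarrow> Add C (Zero C A B) f = f"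
  using add_zero_right[OF homI[of f]] add_zero_left[OF homI[of f]] by auto

lemma add_neg_right_Mor [simp]: "f \<in> Mor C \<Longrightarrow> Add C f (Neg C f) = Zero C (Dom C f) (Cod C f)"
  using add_neg_right[OF homI[of f]] .

lemma comp_reassoc:
  assumes "Comp C g f = h" "f \<in> Mor C" "g \<in> Mor C" "Cod C f = Dom C g"
  shows "x \<in> Mor C \<Longrightarrow> Cod C x = Dom C f \<Longrightarrow> Comp C g (Comp C f x) = Comp C h x"
  using assms comp_assoc_Mor[of x f g] by simp

lemma zero_obj_in_Obj: "is_zero_obj C Z \<Longrightarrow> Z \<in> Obj C"
  unfolding is_zero_obj_def by simp

lemma isomorphic_refl: "A \<in> Obj C \<Longrightarrow> isomorphic C A A"
  unfolding isomorphic_def is_iso_def by (metis id_in_hom comp_id_left)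

lemma isomorphic_sym: "isomorphic C A B \<Longrightarrow> isomorphic C B A"
  unfolding isomorphic_def is_iso_def by blast

lemma isomorphic_trans:
  assumes "isomorphic C A B" "isomorphic C B D"
  shows "isomorphic C A D"
proof -
  obtain f g where f: "f \<in> hom C A B" "g \<in> hom C B A" "Comp C g f = Id C A" "Comp C f g = Id C B"
    using assms(1) unfolding isomorphic_def is_iso_def by blast
  obtain f' g' where f': "f' \<in> hom C B D" "g' \<in> hom C D B" "Comp C g' f' = Id C B" "Comp C f' g' = Id C D"
    using assms(2) unfolding isomorphic_def is_iso_def by blast
  note h = f(1,2)[unfolded hom_iff] f'(1,2)[unfolded hom_iff]
  have "Comp C (Comp C g g') (Comp C f' f) = Id C A" "Comp C (Comp C f' f) (Comp C g g') = Id C D"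
    using h f f' by (simp_all add: comp_reassoc[OF f(3)] comp_reassoc[OF f(4)]
        comp_reassoc[OF f'(3)] comp_reassoc[OF f'(4)])
  then show ?thesis using assms f f' unfolding isomorphic_def is_iso_def by blast
qed

lemma iso_class_eq_iff:
  "B \<in> Obj C \<Longrightarrow> iso_class C A = iso_class C B \<longleftrightarrow> isomorphic C A B"
  unfolding iso_class_def using isomorphic_refl isomorphic_sym isomorphic_trans by blast

lemma finite_indecomposable_iso_classes:
  assumes "additively_finite C"
  shows "finite (iso_class C ` {A. indecomposable C A})"
proof -
  obtain F where F: "finite F" "\<And>A. indecomposable C A \<Longrightarrow> \<exists>B\<in>F. isomorphic C A B"
    using assms unfolding additively_finite_def by blast
  have "iso_class C ` {A. indecomposable C A} \<subseteq> iso_class C ` F"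
  proof
    fix k assume "k \<in> iso_class C ` {A. indecomposable C A}"
    then obtain A where A: "indecomposable C A" "k = iso_class C A" by blast
    then obtain B where B: "B \<in> F" "isomorphic C A B" using F(2) by blast
    then have "k = iso_class C B" using A(2) iso_class_eq_iff unfolding isomorphic_def by simp
    then show "k \<in> iso_class C ` F" using B(1) by blast
  qed
  then show ?thesis using F(1) finite_surj by blast
qed

lemma zero_objs_isomorphic:
  assumes "is_zero_obj C Z" "is_zero_obj C Z'"
  shows "isomorphic C Z Z'"
proof -
  have o: "Z \<in> Obj C" "Z' \<in> Obj C" using assms zero_obj_in_Obj by auto
  have "Comp C (Zero C Z' Z) (Zero C Z Z') = Id C Z" "Comp C (Zero C Z Z') (Zero C Z' Z) = Id C Z'"
    using assms o unfolding is_zero_obj_def by simp_all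
  then show ?thesis using o unfolding isomorphic_def is_iso_def by blast
qed

lemma is_iso_id: "A \<in> Obj C \<Longrightarrow> is_iso C A A (Id C A)"
  unfolding is_iso_def by (intro conjI bexI[of _ "Id C A"]) auto

lemma iso_if_right_inverse_and_mono:
  assumes c: "c \<in> hom C Z Z'" and g: "g \<in> hom C Z' Z" "Comp C c g = Id C Z'"
    and mono: "\<And>h. h \<in> hom C Z Z \<Longrightarrow> Comp C c h = Zero C Z Z' \<Longrightarrow> h = Zero C Z Z"
  shows "is_iso C Z Z' c"
proof -
  note h = c[unfolded hom_iff] g(1)[unfolded hom_iff]
  have Z: "Z \<in> Obj C" using c hom_objs by blast
  have "Comp C c (Add C (Comp C g c) (Neg C (Id C Z))) = Add C c (Neg C c)"
    using h Z by (simp add: comp_reassoc[OF g(2)])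
  also have "\<dots> = Zero C Z Z'" using h by simp
  finally have "Add C (Comp C g c) (Neg C (Id C Z)) = Zero C Z Z"
    using mono h Z by (simp add: hom_iff)
  then have "Comp C g c = Id C Z"
    using eq_if_diff_eq_zero c g Z by blast
  then show ?thesis unfolding is_iso_def using c g by blast
qed

lemma biproduct_swap:
  "is_biproduct C S A1 A2 i1 i2 p1 p2 \<Longrightarrow> is_biproduct C S A2 A1 i2 i1 p2 p1"
  unfolding is_biproduct_def by (metis add_commute comp_in_hom)

lemma biproduct_iso_summand:
  assumes b: "is_biproduct C S A1 A2 i1 i2 p1 p2"
    and f: "f \<in> hom C A1 A1'" "g \<in> hom C A1' A1" "Comp C g f = Id C A1" "Comp C f g = Id C A1'"
  shows "is_biproduct C S A1' A2 (Comp C i1 g) i2 (Comp C f p1) p2"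
proof -
  have bb: "S \<in> Obj C" "A1 \<in> Obj C" "A2 \<in> Obj C"
    "i1 \<in> hom C A1 S" "i2 \<in> hom C A2 S" "p1 \<in> hom C S A1" "p2 \<in> hom C S A2"
    "Comp C p1 i1 = Id C A1" "Comp C p2 i2 = Id C A2"
    "Comp C p1 i2 = Zero C A2 A1" "Comp C p2 i1 = Zero C A1 A2"
    "Add C (Comp C i1 p1) (Comp C i2 p2) = Id C S"
    using b unfolding is_biproduct_def by auto
  note h = bb(4-7)[unfolded hom_iff] f(1,2)[unfolded hom_iff]
  have A1': "A1' \<in> Obj C" using f hom_objs by blast
  note r = comp_reassoc[OF bb(8)] comp_reassoc[OF bb(11)] comp_reassoc[OF f(3)]
  show ?thesis unfolding is_biproduct_def using bb h A1' f
    by (simp add: hom_iff r)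
qed

lemma biproducts_isomorphic:
  assumes b: "is_biproduct C S A1 A2 i1 i2 p1 p2" and b': "is_biproduct C S' A1 A2 i1' i2' p1' p2'"
  shows "isomorphic C S S'"
proof -
  have bb: "S \<in> Obj C" "A1 \<in> Obj C" "A2 \<in> Obj C"
    "i1 \<in> hom C A1 S" "i2 \<in> hom C A2 S" "p1 \<in> hom C S A1" "p2 \<in> hom C S A2"
    "Comp C p1 i1 = Id C A1" "Comp C p2 i2 = Id C A2"
    "Comp C p1 i2 = Zero C A2 A1" "Comp C p2 i1 = Zero C A1 A2"
    "Add C (Comp C i1 p1) (Comp C i2 p2) = Id C S"
    using b unfolding is_biproduct_def by auto
  have bb': "S' \<in> Obj C" "i1' \<in> hom C A1 S'" "i2' \<in> hom C A2 S'" "p1' \<in> hom C S' A1" "p2' \<in> hom C S' A2"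
    "Comp C p1' i1' = Id C A1" "Comp C p2' i2' = Id C A2"
    "Comp C p1' i2' = Zero C A2 A1" "Comp C p2' i1' = Zero C A1 A2"
    "Add C (Comp C i1' p1') (Comp C i2' p2') = Id C S'"
    using b' unfolding is_biproduct_def by auto
  note h = bb(4-7)[unfolded hom_iff] bb'(2-5)[unfolded hom_iff]
  note r = comp_reassoc[OF bb(8)] comp_reassoc[OF bb(9)] comp_reassoc[OF bb(10)] comp_reassoc[OF bb(11)]
    comp_reassoc[OF bb'(6)] comp_reassoc[OF bb'(7)] comp_reassoc[OF bb'(8)] comp_reassoc[OF bb'(9)]
  let ?M = "Add C (Comp C i1' p1) (Comp C i2' p2)"
  let ?N = "Add C (Comp C i1 p1') (Comp C i2 p2')"
  have "Comp C ?N ?M = Id C S" "Comp C ?M ?N = Id C S'"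
    using h bb bb' by (simp_all add: r)
  moreover have "?M \<in> hom C S S'" "?N \<in> hom C S' S"
    using h bb bb' by (simp_all add: hom_iff)
  ultimately show ?thesis using bb bb' unfolding isomorphic_def is_iso_def by blast
qed

lemma biproduct_isomorphic:
  assumes b: "is_biproduct C S A1 A2 i1 i2 p1 p2" and b': "is_biproduct C S' A1' A2' i1' i2' p1' p2'"
    and iso: "isomorphic C A1 A1'" "isomorphic C A2 A2'"
  shows "isomorphic C S S'"
proof -
  obtain f1 g1 where f1: "f1 \<in> hom C A1 A1'" "g1 \<in> hom C A1' A1" "Comp C g1 f1 = Id C A1" "Comp C f1 g1 = Id C A1'"
    using iso(1) unfolding isomorphic_def is_iso_def by blast
  obtain f2 g2 where f2: "f2 \<in> hom C A2 A2'" "g2 \<in> hom C A2' A2" "Comp C g2 f2 = Id C A2" "Comp C f2 g2 = Id C A2'"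
    using iso(2) unfolding isomorphic_def is_iso_def by blast
  have "is_biproduct C S A2' A1' (Comp C i2 g2) (Comp C i1 g1) (Comp C f2 p2) (Comp C f1 p1)"
    using biproduct_iso_summand[OF biproduct_swap[OF biproduct_iso_summand[OF b f1]] f2] .
  then show ?thesis using b' biproducts_isomorphic biproduct_swap by blast
qed

lemma biproduct_complementary_idempotents:
  assumes "is_biproduct C S A1 A2 i1 i2 p1 p2"
  shows "complementary_idempotents C S (Comp C i1 p1) (Comp C i2 p2)"
proof -
  have bb: "S \<in> Obj C" "A1 \<in> Obj C" "A2 \<in> Obj C"
    "i1 \<in> hom C A1 S" "i2 \<in> hom C A2 S" "p1 \<in> hom C S A1" "p2 \<in> hom C S A2"
    "Comp C p1 i1 = Id C A1" "Comp C p2 i2 = Id C A2"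
    "Comp C p1 i2 = Zero C A2 A1" "Comp C p2 i1 = Zero C A1 A2"
    "Add C (Comp C i1 p1) (Comp C i2 p2) = Id C S"
    using assms unfolding is_biproduct_def by auto
  note h = bb(4-7)[unfolded hom_iff]
  note r = comp_reassoc[OF bb(8)] comp_reassoc[OF bb(9)] comp_reassoc[OF bb(10)] comp_reassoc[OF bb(11)]
  show ?thesis unfolding complementary_idempotents_def using h bb by (simp add: hom_iff r)
qed

lemma retraction_target_zero_iff:
  assumes "r \<in> hom C A B" "s \<in> hom C B A" "Comp C r s = Id C B"
  shows "is_zero_obj C B \<longleftrightarrow> Comp C s r = Zero C A A"
proof
  assume "is_zero_obj C B"
  then have "Comp C s (Comp C (Id C B) r) = Comp C s (Comp C (Zero C B B) r)"
    unfolding is_zero_obj_def by simp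
  moreover have "A \<in> Obj C" "B \<in> Obj C" using assms hom_objs by auto
  ultimately show "Comp C s r = Zero C A A" using assms by (simp add: hom_iff)
next
  assume sr: "Comp C s r = Zero C A A"
  have o: "A \<in> Obj C" "B \<in> Obj C" using assms hom_objs by auto
  have "Id C B = Comp C (Comp C r s) (Comp C r s)" using assms o by (simp add: hom_iff)
  also have "\<dots> = Comp C r (Comp C (Comp C s r) s)" using assms(1,2) o by (simp add: hom_iff)
  also have "\<dots> = Zero C B B" using assms(1,2) o by (simp add: sr hom_iff)
  finally show "is_zero_obj C B" using o unfolding is_zero_obj_def by simp
qed

lemma split_complementary_idempotents:
  assumes ic: "idempotent_complete C" and e: "complementary_idempotents C A e1 e2"
  obtains B1 B2 s1 s2 r1 r2 where "is_biproduct C A B1 B2 s1 s2 r1 r2"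
    and "Comp C s1 r1 = e1" "Comp C s2 r2 = e2"
proof -
  have ee: "e1 \<in> hom C A A" "e2 \<in> hom C A A" "Comp C e1 e1 = e1" "Comp C e2 e2 = e2"
    "Comp C e1 e2 = Zero C A A" "Comp C e2 e1 = Zero C A A" "Add C e1 e2 = Id C A"
    using e unfolding complementary_idempotents_def by auto
  have A: "A \<in> Obj C" using ee hom_objs by blast
  obtain B1 r1 s1 where rs1: "B1 \<in> Obj C" "r1 \<in> hom C A B1" "s1 \<in> hom C B1 A"
    "Comp C s1 r1 = e1" "Comp C r1 s1 = Id C B1"
    using ic ee(1,3) A unfolding idempotent_complete_def by blast
  obtain B2 r2 s2 where rs2: "B2 \<in> Obj C" "r2 \<in> hom C A B2" "s2 \<in> hom C B2 A"
    "Comp C s2 r2 = e2" "Comp C r2 s2 = Id C B2"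
    using ic ee(2,4) A unfolding idempotent_complete_def by blast
  note h = rs1(2,3)[unfolded hom_iff] rs2(2,3)[unfolded hom_iff] ee(1,2)[unfolded hom_iff]
  have r1e1: "Comp C r1 e1 = r1" and e1s1: "Comp C e1 s1 = s1"
    using h rs1(1) by (simp_all add: comp_reassoc[OF rs1(5)] rs1(5) flip: rs1(4))
  have r2e2: "Comp C r2 e2 = r2" and e2s2: "Comp C e2 s2 = s2"
    using h rs2(1) by (simp_all add: comp_reassoc[OF rs2(5)] rs2(5) flip: rs2(4))
  have "Comp C r1 s2 = Comp C (Comp C r1 e1) (Comp C e2 s2)" using r1e1 e2s2 by simp
  also have "\<dots> = Zero C B2 B1" using h rs1(1) rs2(1) A by (simp add: comp_reassoc[OF ee(5)])
  finally have r1s2: "Comp C r1 s2 = Zero C B2 B1" .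
  have "Comp C r2 s1 = Comp C (Comp C r2 e2) (Comp C e1 s1)" using r2e2 e1s1 by simp
  also have "\<dots> = Zero C B1 B2" using h rs1(1) rs2(1) A by (simp add: comp_reassoc[OF ee(6)])
  finally have "Comp C r2 s1 = Zero C B1 B2" .
  then have "is_biproduct C A B1 B2 s1 s2 r1 r2"
    unfolding is_biproduct_def using A rs1 rs2 ee r1s2 by simp
  then show ?thesis using that rs1(4) rs2(4) by blast
qed

end

locale ff_endofunctor = preadditive C for C :: "('o,'m) addcat" +
  fixes SO :: "'o \<Rightarrow> 'o" and SM :: "'m \<Rightarrow> 'm"
  assumes endofunctor: "additive_endofunctor C SO SM"
    and ff: "fully_faithful C SO SM"
begin

lemma endofunctor_axioms:
    "\<forall>A\<in>Obj C. SO A \<in> Obj C"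
    "\<forall>A\<in>Obj C. \<forall>B\<in>Obj C. \<forall>f\<in>hom C A B. SM f \<in> hom C (SO A) (SO B)"
    "\<forall>A\<in>Obj C. SM (Id C A) = Id C (SO A)"
    "\<forall>A\<in>Obj C. \<forall>B\<in>Obj C. \<forall>D\<in>Obj C. \<forall>f\<in>hom C A B. \<forall>g\<in>hom C B D.
       SM (Comp C g f) = Comp C (SM g) (SM f)"
    "\<forall>A\<in>Obj C. \<forall>B\<in>Obj C. \<forall>f\<in>hom C A B. \<forall>g\<in>hom C A B.
       SM (Add C f g) = Add C (SM f) (SM g)"
  using endofunctor[unfolded additive_endofunctor_def]
  by (rule conjunct1, rule conjunct2[THEN conjunct1], rule conjunct2[THEN conjunct2, THEN conjunct1],
      rule conjunct2[THEN conjunct2, THEN conjunct2, THEN conjunct1],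
      rule conjunct2[THEN conjunct2, THEN conjunct2, THEN conjunct2])

lemma SO_in_Obj [simp]: "A \<in> Obj C \<Longrightarrow> SO A \<in> Obj C"
  using endofunctor_axioms(1) by blast

lemma SM_in_hom: "f \<in> hom C A B \<Longrightarrow> SM f \<in> hom C (SO A) (SO B)"
  using endofunctor_axioms(2) hom_objs by blast

lemma Mor_SM [simp]: "f \<in> Mor C \<Longrightarrow> SM f \<in> Mor C"
  and Dom_SM [simp]: "f \<in> Mor C \<Longrightarrow> Dom C (SM f) = SO (Dom C f)"
  and Cod_SM [simp]: "f \<in> Mor C \<Longrightarrow> Cod C (SM f) = SO (Cod C f)"
  using SM_in_hom[OF homI[of f]] unfolding hom_iff by auto

lemma SM_id [simp]: "A \<in> Obj C \<Longrightarrow> SM (Id C A) = Id C (SO A)"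
  using endofunctor_axioms(3) by blast

lemma SM_comp [simp]:
  "f \<in> Mor C \<Longrightarrow> g \<in> Mor C \<Longrightarrow> Cod C f = Dom C g \<Longrightarrow> SM (Comp C g f) = Comp C (SM g) (SM f)"
proof -
  assume "f \<in> Mor C" "g \<in> Mor C" "Cod C f = Dom C g"
  then have "f \<in> hom C (Dom C f) (Dom C g)" "g \<in> hom C (Dom C g) (Cod C g)"
    using homI by fastforce+
  then show ?thesis using endofunctor_axioms(4) hom_objs by blast
qed

lemma SM_add [simp]:
  "f \<in> Mor C \<Longrightarrow> g \<in> Mor C \<Longrightarrow> Dom C g = Dom C f \<Longrightarrow> Cod C g = Cod C f \<Longrightarrow>
    SM (Add C f g) = Add C (SM f) (SM g)"
proof -
  assume "f \<in> Mor C" "g \<in> Mor C" "Dom C g = Dom C f" "Cod C g = Cod C f"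
  then have "f \<in> hom C (Dom C f) (Cod C f)" "g \<in> hom C (Dom C f) (Cod C f)"
    using homI by fastforce+
  then show ?thesis using endofunctor_axioms(5) hom_objs by blast
qed

lemma SM_zero [simp]:
  assumes "A \<in> Obj C" "B \<in> Obj C"
  shows "SM (Zero C A B) = Zero C (SO A) (SO B)"
proof (rule idempotent_add_eq_zero)
  show "SM (Zero C A B) \<in> hom C (SO A) (SO B)" using assms by (simp add: hom_iff)
  have "Add C (SM (Zero C A B)) (SM (Zero C A B)) = SM (Add C (Zero C A B) (Zero C A B))"
    by (rule SM_add[symmetric]) (simp_all add: assms)
  then show "Add C (SM (Zero C A B)) (SM (Zero C A B)) = SM (Zero C A B)"
    using assms by simp
qed

lemma SM_neg [simp]:
  assumes "f \<in> Mor C"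
  shows "SM (Neg C f) = Neg C (SM f)"
proof -
  have "Add C (SM f) (SM (Neg C f)) = SM (Add C f (Neg C f))"
    by (rule SM_add[symmetric]) (simp_all add: assms)
  also have "\<dots> = Zero C (SO (Dom C f)) (SO (Cod C f))" using assms by simp
  finally show ?thesis
    using assms neg_unique[of "SM f" "SO (Dom C f)" "SO (Cod C f)" "SM (Neg C f)"] by (simp add: hom_iff)
qed

lemma SM_inject: "f \<in> hom C A B \<Longrightarrow> g \<in> hom C A B \<Longrightarrow> SM f = SM g \<Longrightarrow> f = g"
  using ff hom_objs unfolding fully_faithful_def bij_betw_def inj_on_def by blast

lemma SM_full:
  assumes "A \<in> Obj C" "B \<in> Obj C" "h \<in> hom C (SO A) (SO B)"
  obtains f where "f \<in> hom C A B" "SM f = h"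
proof -
  have "SM ` hom C A B = hom C (SO A) (SO B)"
    using ff assms unfolding fully_faithful_def bij_betw_def by blast
  then show ?thesis using assms(3) that by (metis imageE)
qed

lemma SO_zero_obj:
  assumes "is_zero_obj C Z"
  shows "is_zero_obj C (SO Z)"
proof -
  have Z: "Z \<in> Obj C" and "Id C Z = Zero C Z Z" using assms unfolding is_zero_obj_def by auto
  then have "Id C (SO Z) = SM (Zero C Z Z)" using SM_id by metis
  then show ?thesis using Z unfolding is_zero_obj_def by simp
qed

lemma SO_isomorphic:
  assumes "isomorphic C A B"
  shows "isomorphic C (SO A) (SO B)"
proof -
  obtain f g where f: "f \<in> hom C A B" "g \<in> hom C B A" "Comp C g f = Id C A" "Comp C f g = Id C B"
    using assms unfolding isomorphic_def is_iso_def by blast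
  have o: "A \<in> Obj C" "B \<in> Obj C" using assms unfolding isomorphic_def by auto
  have "Comp C (SM g) (SM f) = SM (Comp C g f)" "Comp C (SM f) (SM g) = SM (Comp C f g)"
    using f(1,2) by (simp_all add: hom_iff)
  then have "Comp C (SM g) (SM f) = Id C (SO A)" "Comp C (SM f) (SM g) = Id C (SO B)"
    using f o by simp_all
  then show ?thesis using o SM_in_hom[OF f(1)] SM_in_hom[OF f(2)]
    unfolding isomorphic_def is_iso_def by auto
qed

lemma SO_iso_lift:
  assumes "A \<in> Obj C" "B \<in> Obj C" "is_iso C (SO A) (SO B) c"
  obtains c0 where "is_iso C A B c0" "SM c0 = c"
proof -
  obtain d where c: "c \<in> hom C (SO A) (SO B)" "d \<in> hom C (SO B) (SO A)"
    "Comp C d c = Id C (SO A)" "Comp C c d = Id C (SO B)"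
    using assms unfolding is_iso_def by blast
  obtain c0 where c0: "c0 \<in> hom C A B" "SM c0 = c" using SM_full assms c by metis
  obtain d0 where d0: "d0 \<in> hom C B A" "SM d0 = d" using SM_full assms c by metis
  have "SM (Comp C d0 c0) = SM (Id C A)" "SM (Comp C c0 d0) = SM (Id C B)"
    using c c0 d0 assms by (auto simp: hom_iff)
  then have "Comp C d0 c0 = Id C A" "Comp C c0 d0 = Id C B"
    using SM_inject c0 d0 assms by (meson comp_in_hom id_in_hom)+
  then show ?thesis using that c0 d0 unfolding is_iso_def by blast
qed

lemma isomorphic_if_SO_isomorphic:
  assumes "A \<in> Obj C" "B \<in> Obj C" "isomorphic C (SO A) (SO B)"
  shows "isomorphic C A B"
proof -
  obtain c where "is_iso C (SO A) (SO B) c" using assms(3) unfolding isomorphic_def by blast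
  then obtain c0 where "is_iso C A B c0" using SO_iso_lift assms(1,2) by blast
  then show ?thesis using assms(1,2) unfolding isomorphic_def by blast
qed

lemma SO_biproduct:
  assumes "is_biproduct C S A1 A2 i1 i2 p1 p2"
  shows "is_biproduct C (SO S) (SO A1) (SO A2) (SM i1) (SM i2) (SM p1) (SM p2)"
proof -
  have bb: "S \<in> Obj C" "A1 \<in> Obj C" "A2 \<in> Obj C"
    "i1 \<in> hom C A1 S" "i2 \<in> hom C A2 S" "p1 \<in> hom C S A1" "p2 \<in> hom C S A2"
    "Comp C p1 i1 = Id C A1" "Comp C p2 i2 = Id C A2"
    "Comp C p1 i2 = Zero C A2 A1" "Comp C p2 i1 = Zero C A1 A2"
    "Add C (Comp C i1 p1) (Comp C i2 p2) = Id C S"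
    using assms unfolding is_biproduct_def by auto
  note h = bb(4-7)[unfolded hom_iff]
  have "SM (Comp C p1 i1) = Id C (SO A1)" "SM (Comp C p2 i2) = Id C (SO A2)"
    "SM (Comp C p1 i2) = Zero C (SO A2) (SO A1)" "SM (Comp C p2 i1) = Zero C (SO A1) (SO A2)"
    "SM (Add C (Comp C i1 p1) (Comp C i2 p2)) = Id C (SO S)"
    using bb by simp_all
  moreover have "SM (Comp C p1 i1) = Comp C (SM p1) (SM i1)" "SM (Comp C p2 i2) = Comp C (SM p2) (SM i2)"
    "SM (Comp C p1 i2) = Comp C (SM p1) (SM i2)" "SM (Comp C p2 i1) = Comp C (SM p2) (SM i1)"
    "SM (Add C (Comp C i1 p1) (Comp C i2 p2)) = Add C (Comp C (SM i1) (SM p1)) (Comp C (SM i2) (SM p2))"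
    using h by simp_all
  ultimately show ?thesis using h bb unfolding is_biproduct_def by (simp add: hom_iff)
qed

lemma complementary_idempotents_if_SM:
  assumes "e1 \<in> hom C A A" "e2 \<in> hom C A A"
    and "complementary_idempotents C (SO A) (SM e1) (SM e2)"
  shows "complementary_idempotents C A e1 e2"
proof -
  have A: "A \<in> Obj C" using assms hom_objs by blast
  note h = assms(1,2)[unfolded hom_iff]
  have "SM (Comp C e1 e1) = SM e1" "SM (Comp C e2 e2) = SM e2"
    "SM (Comp C e1 e2) = SM (Zero C A A)" "SM (Comp C e2 e1) = SM (Zero C A A)"
    "SM (Add C e1 e2) = SM (Id C A)"
    using assms(3) h A unfolding complementary_idempotents_def by simp_all
  then show ?thesis unfolding complementary_idempotents_def using assms A
    by (meson SM_inject add_in_hom comp_in_hom id_in_hom zero_in_hom)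
qed

lemma SO_indecomposable:
  assumes ic: "idempotent_complete C" and ind: "indecomposable C A"
  shows "indecomposable C (SO A)"
proof -
  have A: "A \<in> Obj C" "\<not> is_zero_obj C A"
    and indA: "\<And>B1 B2 i1 i2 p1 p2. is_biproduct C A B1 B2 i1 i2 p1 p2 \<Longrightarrow>
      is_zero_obj C B1 \<or> is_zero_obj C B2"
    using ind unfolding indecomposable_def by blast+
  have "\<not> is_zero_obj C (SO A)"
  proof
    assume "is_zero_obj C (SO A)"
    then have "SM (Id C A) = SM (Zero C A A)" using A unfolding is_zero_obj_def by simp
    then have "Id C A = Zero C A A" using SM_inject A by (metis id_in_hom zero_in_hom)
    then show False using A unfolding is_zero_obj_def by simp
  qed
  moreover have "is_zero_obj C B1 \<or> is_zero_obj C B2"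
    if b: "is_biproduct C (SO A) B1 B2 i1 i2 p1 p2" for B1 B2 i1 i2 p1 p2
  proof -
    have bb: "i1 \<in> hom C B1 (SO A)" "i2 \<in> hom C B2 (SO A)" "p1 \<in> hom C (SO A) B1" "p2 \<in> hom C (SO A) B2"
      "Comp C p1 i1 = Id C B1" "Comp C p2 i2 = Id C B2"
      using b unfolding is_biproduct_def by auto
    have "Comp C i1 p1 \<in> hom C (SO A) (SO A)" "Comp C i2 p2 \<in> hom C (SO A) (SO A)"
      using bb by blast+
    then obtain e1 e2 where e: "e1 \<in> hom C A A" "SM e1 = Comp C i1 p1"
      "e2 \<in> hom C A A" "SM e2 = Comp C i2 p2"
      using SM_full A by metis
    then have "complementary_idempotents C A e1 e2"
      using complementary_idempotents_if_SM biproduct_complementary_idempotents[OF b] by metis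
    then obtain B1' B2' s1 s2 r1 r2 where split: "is_biproduct C A B1' B2' s1 s2 r1 r2"
      and s: "Comp C s1 r1 = e1" "Comp C s2 r2 = e2"
      using split_complementary_idempotents ic by metis
    have "e1 = Zero C A A \<or> e2 = Zero C A A"
      using indA[OF split] retraction_target_zero_iff s split
      unfolding is_biproduct_def by metis
    then have "Comp C i1 p1 = Zero C (SO A) (SO A) \<or> Comp C i2 p2 = Zero C (SO A) (SO A)"
      using e A by auto
    then show ?thesis using retraction_target_zero_iff bb by metis
  qed
  ultimately show ?thesis using A unfolding indecomposable_def by simp
qed

lemma indecomposable_in_ess_image:
  assumes ic: "idempotent_complete C" and af: "additively_finite C"
    and X: "indecomposable C X"
  obtains A where "A \<in> Obj C" "isomorphic C X (SO A)"
proof -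
  have indec_Obj: "indecomposable C A \<Longrightarrow> A \<in> Obj C" for A
    unfolding indecomposable_def by blast
  define K where "K = iso_class C ` {A. indecomposable C A}"
  define \<phi> where "\<phi> k = iso_class C (SO (SOME A. A \<in> k))" for k
  have "finite K" unfolding K_def using finite_indecomposable_iso_classes[OF af] .
  have \<phi>_iso_class: "\<phi> (iso_class C A) = iso_class C (SO A)" if "A \<in> Obj C" for A
  proof -
    have "(SOME A'. A' \<in> iso_class C A) \<in> iso_class C A"
      by (rule someI[of _ A]) (simp add: iso_class_def isomorphic_refl that)
    then have "isomorphic C (SO (SOME A'. A' \<in> iso_class C A)) (SO A)"
      using SO_isomorphic isomorphic_sym unfolding iso_class_def by blast
    then show ?thesis unfolding \<phi>_def
      using iso_class_eq_iff that SO_in_Obj by simp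
  qed
  have "\<phi> ` K \<subseteq> K"
    unfolding K_def using \<phi>_iso_class SO_indecomposable[OF ic] indec_Obj by auto
  moreover have "inj_on \<phi> K"
  proof (rule inj_onI)
    fix k k' assume "k \<in> K" "k' \<in> K" and eq: "\<phi> k = \<phi> k'"
    then obtain A A' where A: "indecomposable C A" "k = iso_class C A"
      "indecomposable C A'" "k' = iso_class C A'"
      unfolding K_def by blast
    then have "isomorphic C (SO A) (SO A')"
      using eq \<phi>_iso_class indec_Obj iso_class_eq_iff SO_in_Obj by metis
    then show "k = k'"
      using A isomorphic_if_SO_isomorphic indec_Obj iso_class_eq_iff by metis
  qed
  ultimately have "\<phi> ` K = K" using endo_inj_surj[OF \<open>finite K\<close>] by blast
  moreover have "iso_class C X \<in> K" using X unfolding K_def by blast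
  ultimately have "iso_class C X \<in> \<phi> ` K" by simp
  then obtain A where A: "indecomposable C A" "iso_class C X = \<phi> (iso_class C A)"
    unfolding K_def by blast
  then have "iso_class C X = iso_class C (SO A)" using \<phi>_iso_class indec_Obj by simp
  then show ?thesis using that A(1) iso_class_eq_iff indec_Obj SO_in_Obj by metis
qed

lemma essentially_surjective:
  assumes ad: "is_additive C" and ic: "idempotent_complete C" and af: "additively_finite C"
  shows "essentially_surjective C SO"
proof -
  have "\<exists>A\<in>Obj C. isomorphic C X (SO A)" if "fin_dsum_indec C X" for X
    using that
  proof (induction rule: fin_dsum_indec.induct)
    case (zero Z)
    then have "isomorphic C Z (SO Z)" using SO_zero_obj zero_objs_isomorphic by blast
    then show ?case using zero zero_obj_in_Obj by blast
  next
    case (indec A)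
    then show ?case using indecomposable_in_ess_image[OF ic af] by metis
  next
    case (sum S A1 A2 i1 i2 p1 p2)
    then obtain B1 B2 where B: "B1 \<in> Obj C" "isomorphic C A1 (SO B1)"
      "B2 \<in> Obj C" "isomorphic C A2 (SO B2)"
      by blast
    obtain T j1 j2 q1 q2 where T: "is_biproduct C T B1 B2 j1 j2 q1 q2"
      using ad B unfolding is_additive_def by blast
    have "isomorphic C S (SO T)"
      using biproduct_isomorphic[OF sum(1) SO_biproduct[OF T] B(2,4)] .
    moreover have "T \<in> Obj C" using T unfolding is_biproduct_def by blast
    ultimately show ?case by blast
  qed
  then show ?thesis
    using af unfolding additively_finite_def essentially_surjective_def ess_image_def by blast
qed
end

locale ff_right_triangulated = ff_endofunctor C SO SM for C :: "('o,'m) addcat" and SO SM +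
  fixes Delta :: "('o,'m) tri set"
  assumes right_triangulated: "right_triangulated C SO SM Delta"
begin

lemma right_triangulated_axioms:
    "is_additive C"
    "\<forall>T\<in>Delta. is_tri C SO T"
    "\<forall>T\<in>Delta. \<forall>T' a b c. is_tri C SO T' \<and> tri_iso C SO SM T T' a b c \<longrightarrow> T' \<in> Delta"
    "\<forall>A\<in>Obj C. \<forall>Z0. is_zero_obj C Z0 \<longrightarrow>
       (A, A, Z0, Id C A, Zero C A Z0, Zero C Z0 (SO A)) \<in> Delta"
    "\<forall>A\<in>Obj C. \<forall>B\<in>Obj C. \<forall>x\<in>hom C A B. \<exists>D y z. (A,B,D,x,y,z) \<in> Delta"
    "\<forall>A B D x y z. (A,B,D,x,y,z) \<in> Delta \<longrightarrow> (B, D, SO A, y, z, Neg C (SM x)) \<in> Delta"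
    "\<forall>A B D x y z A' B' D' x' y' z' a b.
       (A,B,D,x,y,z) \<in> Delta \<and> (A',B',D',x',y',z') \<in> Delta \<and>
       a \<in> hom C A A' \<and> b \<in> hom C B B' \<and> Comp C b x = Comp C x' a \<longrightarrow>
       (\<exists>c. tri_morph C SO SM (A,B,D,x,y,z) (A',B',D',x',y',z') a b c)"
  using right_triangulated unfolding right_triangulated_def by - (elim conjE, assumption)+

lemma triangle_is_tri: "T \<in> Delta \<Longrightarrow> is_tri C SO T"
  using right_triangulated_axioms(2) by blast

lemma triangle_iso_closed:
  "T \<in> Delta \<Longrightarrow> is_tri C SO T' \<Longrightarrow> tri_iso C SO SM T T' a b c \<Longrightarrow> T' \<in> Delta"
  using right_triangulated_axioms(3) by blast

lemma trivial_triangle: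
  "A \<in> Obj C \<Longrightarrow> is_zero_obj C Z \<Longrightarrow> (A, A, Z, Id C A, Zero C A Z, Zero C Z (SO A)) \<in> Delta"
  using right_triangulated_axioms(4) by blast

lemma triangle_exists: "x \<in> hom C A B \<Longrightarrow> \<exists>D y z. (A,B,D,x,y,z) \<in> Delta"
  using right_triangulated_axioms(5) hom_objs by blast

lemma triangle_rotate: "(A,B,D,x,y,z) \<in> Delta \<Longrightarrow> (B, D, SO A, y, z, Neg C (SM x)) \<in> Delta"
  using right_triangulated_axioms(6) by blast

lemma triangle_morphism_completion:
  assumes "(A,B,D,x,y,z) \<in> Delta" "(A',B',D',x',y',z') \<in> Delta"
    and "a \<in> hom C A A'" "b \<in> hom C B B'" "Comp C b x = Comp C x' a"
  obtains c where "c \<in> hom C D D'" "Comp C c y = Comp C y' b" "Comp C (SM a) z = Comp C z' c"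
proof -
  have "\<exists>c. tri_morph C SO SM (A,B,D,x,y,z) (A',B',D',x',y',z') a b c"
    using right_triangulated_axioms(7) assms by blast
  then show ?thesis using that unfolding tri_morph_def by auto
qed

lemma triangle_in_hom:
  "(A,B,D,x,y,z) \<in> Delta \<Longrightarrow> A \<in> Obj C \<and> B \<in> Obj C \<and> D \<in> Obj C \<and>
     x \<in> hom C A B \<and> y \<in> hom C B D \<and> z \<in> hom C D (SO A)"
  using triangle_is_tri unfolding is_tri_def by fastforce

lemma triangle_comp_zero:
  assumes T: "(X,Y,Z,u,v,w) \<in> Delta"
  shows "Comp C v u = Zero C X Z"
proof -
  obtain Z0 where Z0: "is_zero_obj C Z0" using right_triangulated_axioms(1) unfolding is_additive_def by blast
  have t: "X \<in> Obj C" "Y \<in> Obj C" "Z \<in> Obj C" "u \<in> hom C X Y" "v \<in> hom C Y Z"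
    using triangle_in_hom[OF T] by auto
  obtain c where "c \<in> hom C Z0 Z" "Comp C c (Zero C X Z0) = Comp C v u"
    using triangle_morphism_completion[OF trivial_triangle[OF t(1) Z0] T, of "Id C X" u] t
    by (auto simp: hom_iff)
  then show ?thesis using t zero_obj_in_Obj[OF Z0] by (simp add: hom_iff)
qed

text \<open>Completing a morphism from the rotated trivial triangle of W factors f after
applying Sigma; full faithfulness removes Sigma.\<close>

lemma triangle_exact:
  assumes T: "(X,Y,Z,u,v,w) \<in> Delta" and f: "f \<in> hom C W Y" "Comp C v f = Zero C W Z"
  obtains k where "k \<in> hom C W X" "f = Comp C u k"
proof -
  obtain Z0 where Z0: "is_zero_obj C Z0" using right_triangulated_axioms(1) unfolding is_additive_def by blast
  have t: "X \<in> Obj C" "Y \<in> Obj C" "Z \<in> Obj C" "u \<in> hom C X Y" "v \<in> hom C Y Z"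
    using triangle_in_hom[OF T] by auto
  have z: "Z0 \<in> Obj C" using zero_obj_in_Obj[OF Z0] .
  have W: "W \<in> Obj C" using f hom_objs by blast
  have R0: "(W, Z0, SO W, Zero C W Z0, Zero C Z0 (SO W), Neg C (SM (Id C W))) \<in> Delta"
    using triangle_rotate[OF trivial_triangle[OF W Z0]] by simp
  obtain c where c: "c \<in> hom C (SO W) (SO X)"
    "Comp C (SM f) (Neg C (SM (Id C W))) = Comp C (Neg C (SM u)) c"
    using triangle_morphism_completion[OF R0 triangle_rotate[OF T], of f "Zero C Z0 Z"] t f z W
    by (auto simp: hom_iff)
  have "Neg C (SM f) = Neg C (Comp C (SM u) c)" using c t f W by (simp add: hom_iff)
  then have "Neg C (Neg C (SM f)) = Neg C (Neg C (Comp C (SM u) c))" by simp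
  then have "SM f = Comp C (SM u) c" using c t f W by (simp add: hom_iff)
  moreover obtain k where k: "k \<in> hom C W X" "SM k = c" using SM_full c W t by metis
  ultimately have "SM f = SM (Comp C u k)" using t by (simp add: hom_iff)
  then have "f = Comp C u k" using SM_inject f k t by (meson comp_in_hom)
  then show ?thesis using that k by blast
qed

context
  fixes X Y Z Z' u v w v' w' c
  assumes P: "(X,Y,Z,u,v,w) \<in> Delta" and P': "(X,Y,Z',u,v',w') \<in> Delta"
    and c: "c \<in> hom C Z Z'" and cv: "Comp C c v = v'" and cw: "w = Comp C w' c"
begin

lemma third_morphism_surj:
  assumes g: "g \<in> hom C W Z'"
  obtains h where "h \<in> hom C W Z" "Comp C c h = g"
proof -
  have t: "X \<in> Obj C" "Y \<in> Obj C" "Z' \<in> Obj C" "u \<in> hom C X Y" "v \<in> hom C Y Z"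
    "w \<in> hom C Z (SO X)" "v' \<in> hom C Y Z'" "w' \<in> hom C Z' (SO X)"
    using triangle_in_hom[OF P] triangle_in_hom[OF P'] by auto
  note h = t(4-8)[unfolded hom_iff] c[unfolded hom_iff] g[unfolded hom_iff]
  have W: "W \<in> Obj C" using g hom_objs by blast
  have RP': "(Y,Z',SO X,v',w',Neg C (SM u)) \<in> Delta" using triangle_rotate[OF P'] .
  have RRP: "(Z,SO X,SO Y,w,Neg C (SM u),Neg C (SM v)) \<in> Delta"
    using triangle_rotate[OF triangle_rotate[OF P]] .
  have "Comp C (Neg C (SM u)) w' = Zero C Z' (SO Y)"
    using triangle_comp_zero[OF triangle_rotate[OF RP']] .
  then have "Neg C (Neg C (Comp C (SM u) w')) = Neg C (Zero C Z' (SO Y))" using h t by simp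
  then have uw': "Comp C (SM u) w' = Zero C Z' (SO Y)" using h t by (simp add: neg_zero)
  have "Comp C (Neg C (SM u)) (Comp C w' g) = Zero C W (SO Y)"
    using h W t by (simp add: comp_reassoc[OF uw'] neg_zero)
  moreover have "Comp C w' g \<in> hom C W (SO X)" using h W t by (simp add: hom_iff)
  ultimately obtain h1 where h1: "h1 \<in> hom C W Z" "Comp C w' g = Comp C w h1"
    using triangle_exact[OF RRP] by metis
  note hh1 = h1(1)[unfolded hom_iff]
  define d where "d = Add C g (Neg C (Comp C c h1))"
  have dh: "d \<in> hom C W Z'" using hh1 h unfolding d_def by (simp add: hom_iff)
  have "Comp C w' d = Add C (Comp C w' g) (Neg C (Comp C w h1))"
    unfolding d_def using hh1 h by (simp add: comp_reassoc[OF cw[symmetric]])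
  also have "\<dots> = Zero C W (SO X)" using h1 hh1 h by simp
  finally obtain k where k: "k \<in> hom C W Y" "d = Comp C v' k"
    using triangle_exact[OF RP' dh] by metis
  note hk = k(1)[unfolded hom_iff]
  have "g = Add C (Comp C c h1) d" unfolding d_def
    using add_diff_cancel_left[of "Comp C c h1" W Z' g] hh1 h by (simp add: hom_iff)
  also have "\<dots> = Comp C c (Add C h1 (Comp C v k))"
    using k(2) hk hh1 h by (simp add: comp_reassoc[OF cv])
  finally have "Comp C c (Add C h1 (Comp C v k)) = g" by simp
  moreover have "Add C h1 (Comp C v k) \<in> hom C W Z" using hk hh1 h by (simp add: hom_iff)
  ultimately show ?thesis using that by blast
qed

lemma third_morphism_mono:
  assumes hh: "h \<in> hom C W Z" "Comp C c h = Zero C W Z'"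
  shows "h = Zero C W Z"
proof -
  have t: "X \<in> Obj C" "Z \<in> Obj C" "u \<in> hom C X Y" "v \<in> hom C Y Z" "w \<in> hom C Z (SO X)"
    "v' \<in> hom C Y Z'" "w' \<in> hom C Z' (SO X)"
    using triangle_in_hom[OF P] triangle_in_hom[OF P'] by auto
  note h = t(3-7)[unfolded hom_iff] c[unfolded hom_iff] hh(1)[unfolded hom_iff]
  have W: "W \<in> Obj C" using hh hom_objs by blast
  have "Comp C w h = Comp C w' (Comp C c h)" using h by (simp add: cw)
  also have "\<dots> = Zero C W (SO X)" using hh h W by simp
  finally obtain k where k: "k \<in> hom C W Y" "h = Comp C v k"
    using triangle_exact[OF triangle_rotate[OF P] hh(1)] by metis
  note hk = k(1)[unfolded hom_iff]
  have "Comp C v' k = Comp C c h" using k hk h by (simp add: comp_reassoc[OF cv])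
  then have "Comp C v' k = Zero C W Z'" using hh by simp
  then obtain m where m: "m \<in> hom C W X" "k = Comp C u m"
    using triangle_exact[OF P' k(1)] by metis
  note hm = m(1)[unfolded hom_iff]
  show "h = Zero C W Z"
    using k(2) m(2) hm h t W by (simp add: comp_reassoc[OF triangle_comp_zero[OF P]])
qed

lemma third_morphism_iso: "is_iso C Z Z' c"
proof -
  have "Z' \<in> Obj C" using triangle_in_hom[OF P'] by auto
  then obtain g where "g \<in> hom C Z' Z" "Comp C c g = Id C Z'"
    using third_morphism_surj[of "Id C Z'" Z'] by auto
  then show ?thesis
    using iso_if_right_inverse_and_mono[OF c] third_morphism_mono by blast
qed

end

lemma triangle_unrotate:
  assumes tri: "is_tri C SO (A,B,D,x,y,z)" and R: "(B, D, SO A, y, z, Neg C (SM x)) \<in> Delta"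
  shows "(A,B,D,x,y,z) \<in> Delta"
proof -
  have t: "A \<in> Obj C" "B \<in> Obj C" "D \<in> Obj C" "x \<in> hom C A B" "y \<in> hom C B D" "z \<in> hom C D (SO A)"
    using tri unfolding is_tri_def by auto
  obtain D' y' z' where T: "(A,B,D',x,y',z') \<in> Delta" using triangle_exists t(4) by blast
  have t': "D' \<in> Obj C" "y' \<in> hom C B D'" "z' \<in> hom C D' (SO A)"
    using triangle_in_hom[OF T] by auto
  note h = t(4-6)[unfolded hom_iff] t'(2,3)[unfolded hom_iff]
  have P: "(SO A, SO B, SO D', Neg C (SM x), Neg C (SM y'), Neg C (SM z')) \<in> Delta"
    using triangle_rotate[OF triangle_rotate[OF triangle_rotate[OF T]]] .
  have P': "(SO A, SO B, SO D, Neg C (SM x), Neg C (SM y), Neg C (SM z)) \<in> Delta"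
    using triangle_rotate[OF triangle_rotate[OF R]] .
  obtain c where c: "c \<in> hom C (SO D') (SO D)"
    "Comp C c (Neg C (SM y')) = Comp C (Neg C (SM y)) (Id C (SO B))"
    "Comp C (SM (Id C (SO A))) (Neg C (SM z')) = Comp C (Neg C (SM z)) c"
    using triangle_morphism_completion[OF P P', of "Id C (SO A)" "Id C (SO B)"] t h
    by (auto simp: hom_iff)
  note hc = c(1)[unfolded hom_iff]
  have cy: "Comp C c (Neg C (SM y')) = Neg C (SM y)" using c(2) h hc t by simp
  have cz: "Neg C (SM z') = Comp C (Neg C (SM z)) c" using c(3) h hc t by simp
  have "is_iso C (SO D') (SO D) c" by (rule third_morphism_iso[OF P P' c(1) cy cz])
  then obtain c0 where c0: "is_iso C D' D c0" "SM c0 = c" using SO_iso_lift t t' by metis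
  then have c0h: "c0 \<in> hom C D' D" unfolding is_iso_def by blast
  note hc0 = c0h[unfolded hom_iff]
  have "Neg C (Neg C (Comp C c (SM y'))) = Neg C (Neg C (SM y))" using cy h hc by simp
  then have "SM (Comp C c0 y') = SM y" using h hc hc0 c0 by simp
  then have e1: "Comp C c0 y' = y" using SM_inject c0h t t' by (meson comp_in_hom)
  have "Neg C (Neg C (SM z')) = Neg C (Neg C (Comp C (SM z) c))" using cz h hc by simp
  then have "SM z' = SM (Comp C z c0)" using h hc hc0 c0 by simp
  then have e2: "z' = Comp C z c0" using SM_inject c0h t t' by (meson comp_in_hom)
  have "tri_morph C SO SM (A,B,D',x,y',z') (A,B,D,x,y,z) (Id C A) (Id C B) c0"
    unfolding tri_morph_def using t h hc0 c0h e1 e2 by (simp add: hom_iff)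
  then have "tri_iso C SO SM (A,B,D',x,y',z') (A,B,D,x,y,z) (Id C A) (Id C B) c0"
    unfolding tri_iso_def using c0(1) is_iso_id t by simp
  then show ?thesis using triangle_iso_closed T tri by blast
qed

end

theorem mainTheorem13:
  fixes C :: "('o,'m) addcat" and SO :: "'o \<Rightarrow> 'o" and SM :: "'m \<Rightarrow> 'm"
    and Delta :: "('o,'m) tri set"
  assumes "right_triangulated C SO SM Delta"
    and "right_semi_equivalence C SO SM Delta"
    and "idempotent_complete C"
    and "additively_finite C"
  shows "autoequivalence C SO SM \<and> triangulated C SO SM Delta"
proof -
  have additive: "is_additive C" and endofunctor: "additive_endofunctor C SO SM"
    using assms(1) unfolding right_triangulated_def by blast+
  have ff: "fully_faithful C SO SM"
    using assms(2) unfolding right_semi_equivalence_def by blast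
  interpret ff_right_triangulated C SO SM Delta
    using additive endofunctor ff assms(1)
    by unfold_locales (simp_all add: is_additive_def)
  have autoeq: "autoequivalence C SO SM"
    unfolding autoequivalence_def
    using endofunctor ff essentially_surjective[OF additive assms(3,4)] by blast
  then show ?thesis
    unfolding triangulated_def using assms(1) triangle_unrotate by blast
qed

end
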